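(* Let $l_0\in\mathbb N$ and $G\in\operatorname{2\text{-}d\text{-}Ring}_{l_0}$. If $l_0\ge2$ is even, the vertices alternate between black and white along the cyclic ring order of $G$. If $l_0$ is odd, the colours alternate along the cyclic ring order except for exactly one pair of cyclically consecutive vertices which are both black.
   Context: For a finite vertex set $V$ and $N\ge1$, a route through $V$ of length $N$ is a sequence $\mathbf i=(i_1,\dots,i_N)\in V^N$ whose set of entries equals $V$; its circuit multigraph $G_{\mathbf i}$ has vertex set $V$ and edges $1,\dots,N$, edge $k<N$ from $i_k$ to $i_{k+1}$, edge $N$ from $i_N$ to $i_1$; $\mathcal C_{V,N}$ is the set of these. The black vertices are $B(G_{\mathbf i})=\{i_t:t\text{ odd}\}$, the others white. An undirected connection between $v,w$ (possibly $v=w$) exists if $G$ has an edge from $v$ to $w$ or from $w$ to $v$; $\operatorname U(G)$ is the simple undirected graph (loops allowed) with an edge per undirected connection. A directed multigraph is balanced if its edges split into pairs $(e,e')$ with the head of $e$ the tail of $e'$ and vice versa. $G\in\mathcal C_{V,2l_0}$ with $\#V=l_0$ is of ring-type if $\operatorname U(G)$ is a cycle through all $l_0$ vertices (for $l_0=1$ a single loop, for $l_0=2$ a single edge) and each undirected connection consists of exactly two edges of $G$; $\operatorname{2\text{-}d\text{-}Ring}_{l_0}$ is the set of balanced ring-type graphs with $l_0$ vertices. The ring order is the cyclic order of the vertices along this cycle (for $l_0=1$ the single vertex is consecutive to itself). *)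

theory Defs
  imports Main
begin

text \<open>A route through V of length N is a list i of length N (0-indexed: entry k is
  the paper's i_(k+1)) whose set of entries is V.  Edge k (k < N) of the circuit
  multigraph G_i goes from i!k to i!((k+1) mod N).\<close>

definition is_route :: "'a set \<Rightarrow> nat \<Rightarrow> 'a list \<Rightarrow> bool" where
  "is_route V N i \<longleftrightarrow> N \<ge> 1 \<and> length i = N \<and> set i = V"

definition etail :: "'a list \<Rightarrow> nat \<Rightarrow> 'a" where
  "etail i k = i ! k"

definition ehead :: "'a list \<Rightarrow> nat \<Rightarrow> 'a" where
  "ehead i k = i ! (Suc k mod length i)"

text \<open>Black vertices: i_t with t odd (1-indexed), i.e. list positions k even.\<close>
definition black :: "'a list \<Rightarrow> 'a set" where
  "black i = {i ! k | k. k < length i \<and> even k}"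

text \<open>Undirected connection carried by edge k (a loop is the singleton set).\<close>
definition uconn :: "'a list \<Rightarrow> nat \<Rightarrow> 'a set" where
  "uconn i k = {etail i k, ehead i k}"

definition UE :: "'a list \<Rightarrow> 'a set set" where
  "UE i = uconn i ` {..<length i}"

definition balanced :: "'a list \<Rightarrow> bool" where
  "balanced i \<longleftrightarrow> (\<exists>p. \<forall>k < length i. p k < length i \<and> p k \<noteq> k \<and> p (p k) = k
       \<and> ehead i k = etail i (p k) \<and> etail i k = ehead i (p k))"

text \<open>c is a ring order: a cyclic enumeration of V such that U(G_i) is exactly the
  cycle c 0, c 1, ..., c (l0-1), c 0 (for l0 = 1 a loop, for l0 = 2 one edge).\<close>
definition ring_order :: "'a set \<Rightarrow> 'a list \<Rightarrow> (nat \<Rightarrow> 'a) \<Rightarrow> bool" where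
  "ring_order V i c \<longleftrightarrow> bij_betw c {..<card V} V \<and>
     UE i = {{c j, c (Suc j mod card V)} | j. j < card V}"

definition ring_type :: "'a set \<Rightarrow> 'a list \<Rightarrow> bool" where
  "ring_type V i \<longleftrightarrow> finite V \<and> is_route V (2 * card V) i \<and> (\<exists>c. ring_order V i c) \<and>
     (\<forall>e \<in> UE i. card {k. k < length i \<and> uconn i k = e} = 2)"

definition two_d_ring :: "nat \<Rightarrow> 'a set \<Rightarrow> 'a list \<Rightarrow> bool" where
  "two_d_ring l0 V i \<longleftrightarrow> card V = l0 \<and> ring_type V i \<and> balanced i"

end

theory Submission
  imports Defs
begin

text \<open>Lift the closed walk through the ring to the integers, its universal cover: the walk
  then becomes a height function with steps \<open>\<plusminus>1\<close>, and the vertex visited at time \<open>k\<close>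
  lies over height \<open>h k\<close>.  Balancedness pairs every step with a reverse step,
  so the heights return to \<open>0\<close>.  Every ring edge is crossed, so the range of the heights
  has length at least \<open>l0\<close>; each ring edge is crossed exactly twice, so the length is
  at most \<open>l0\<close>, since otherwise the edge at the lowest level and its translate by \<open>l0\<close>
  would both be crossed up and down.  Black vertices are those visited at even times,
  i.e. the images of the even heights in an interval \<open>[a, a + l0]\<close>.  Read modulo
  \<open>l0\<close>, these alternate with the odd ones when \<open>l0\<close> is even; when \<open>l0\<close> is odd,
  the two ends of the interval have different parity, and exactly one pair of
  neighbours is black.  Rings with \<open>l0 \<le> 2\<close>, where the lift is not unique,
  are checked directly.\<close>

section \<open>Even representatives of residues in a window\<close>

definition has_even_rep :: "nat \<Rightarrow> int \<Rightarrow> int \<Rightarrow> bool" where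
  "has_even_rep n a t \<longleftrightarrow> (\<exists>v. a \<le> v \<and> v \<le> a + int n \<and> even v \<and> v mod int n = t mod int n)"

lemma has_even_rep_iff:
  assumes "n > 0"
  shows "has_even_rep n a t \<longleftrightarrow>
    even (a + (t - a) mod int n) \<or> ((t - a) mod int n = 0 \<and> even (a + int n))"
    (is "_ \<longleftrightarrow> even (a + ?r) \<or> _")
proof
  assume "has_even_rep n a t"
  then obtain v where v: "a \<le> v" "v \<le> a + int n" "even v" "v mod int n = t mod int n"
    unfolding has_even_rep_def by blast
  have r: "(v - a) mod int n = ?r"
    using v(4) by (rule mod_diff_cong) (rule refl)
  show "even (a + ?r) \<or> (?r = 0 \<and> even (a + int n))"
  proof (cases "v = a + int n")
    case True
    then show ?thesis using r v(3) by simp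
  next
    case False
    then have "(v - a) mod int n = v - a" using v(1,2) by simp
    then show ?thesis using r v(3) by simp
  qed
next
  assume "even (a + ?r) \<or> (?r = 0 \<and> even (a + int n))"
  then show "has_even_rep n a t"
  proof
    assume "even (a + ?r)"
    moreover have "(a + ?r) mod int n = t mod int n"
      by (simp add: mod_add_right_eq)
    moreover have "0 \<le> ?r" "?r < int n" using assms by simp_all
    ultimately show ?thesis
      unfolding has_even_rep_def by (intro exI[of _ "a + ?r"]) simp
  next
    assume r0: "?r = 0 \<and> even (a + int n)"
    then have "t mod int n = a mod int n"
      by (simp add: mod_eq_dvd_iff mod_eq_0_iff_dvd)
    then show ?thesis
      unfolding has_even_rep_def using r0 by (intro exI[of _ "a + int n"]) simp
  qed
qed

lemma mod_add_one_int:
  assumes "n > 0"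
  shows "(x + 1) mod int n = (if x mod int n = int n - 1 then 0 else x mod int n + 1)"
proof -
  have "(x + 1) mod int n = (x mod int n + 1) mod int n"
    by (simp add: mod_add_left_eq)
  moreover have "0 \<le> x mod int n" "x mod int n < int n" using assms by simp_all
  ultimately show ?thesis by auto
qed

lemma has_even_rep_Suc_iff:
  assumes "n > 0"
  shows "has_even_rep n a (t + 1) \<longleftrightarrow>
    (if (t - a) mod int n = int n - 1 then even a \<or> even (a + int n)
     else even (a + (t - a) mod int n + 1))"
proof -
  have "0 \<le> (t - a) mod int n" using assms by simp
  moreover have "(t + 1 - a) mod int n =
      (if (t - a) mod int n = int n - 1 then 0 else (t - a) mod int n + 1)"
    using mod_add_one_int[OF assms, of "t - a"] by (simp add: algebra_simps)
  ultimately show ?thesis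
    using has_even_rep_iff[OF assms, of a "t + 1"] by (auto simp: add.assoc)
qed

lemma has_even_rep_even_period:
  assumes "even n" "n > 0"
  shows "has_even_rep n a (t + 1) \<longleftrightarrow> \<not> has_even_rep n a t"
proof -
  define r where "r = (t - a) mod int n"
  have "0 \<le> r" "r < int n" "even (int n)"
    using assms by (simp_all add: r_def)
  then show ?thesis
    unfolding has_even_rep_iff[OF assms(2), of a t] has_even_rep_Suc_iff[OF assms(2)] r_def[symmetric]
    by (cases "r = int n - 1") auto
qed

lemma has_even_rep_odd_period:
  assumes "odd n"
  shows "has_even_rep n a t \<or> has_even_rep n a (t + 1)"
proof -
  define r where "r = (t - a) mod int n"
  have n: "n > 0" using odd_pos[OF assms] .
  have "0 \<le> r" "r < int n" "odd (int n)"
    using assms n by (simp_all add: r_def)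
  then show ?thesis
    unfolding has_even_rep_iff[OF n, of a t] has_even_rep_Suc_iff[OF n] r_def[symmetric]
    by (cases "r = int n - 1") auto
qed

lemma has_even_rep_odd_both_iff:
  assumes "odd n"
  shows "has_even_rep n a t \<and> has_even_rep n a (t + 1) \<longleftrightarrow>
    t mod int n = (if even a then a - 1 else a) mod int n"
proof -
  define r where "r = (t - a) mod int n"
  have n: "n > 0" using odd_pos[OF assms] .
  have "0 \<le> r" "r < int n" "odd (int n)"
    using assms n by (simp_all add: r_def)
  then have "has_even_rep n a t \<and> has_even_rep n a (t + 1) \<longleftrightarrow>
      r = (if even a then int n - 1 else 0)"
    unfolding has_even_rep_iff[OF n, of a t] has_even_rep_Suc_iff[OF n] r_def[symmetric]
    by (cases "r = int n - 1"; cases "r = 0") auto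
  also have "\<dots> \<longleftrightarrow> (t - a) mod int n = (if even a then - 1 else 0) mod int n"
    using n by (simp add: r_def zmod_minus1)
  also have "\<dots> \<longleftrightarrow> t mod int n = (if even a then a - 1 else a) mod int n"
    by (simp add: mod_eq_dvd_iff algebra_simps)
  finally show ?thesis .
qed

lemma card_residue_class:
  assumes "n > 0"
  shows "card {j. j < n \<and> (int j + q) mod int n = x mod int n} = 1"
proof -
  let ?j = "nat ((x - q) mod int n)"
  have "(int j + q) mod int n = x mod int n \<longleftrightarrow> j = ?j" if "j < n" for j
  proof -
    have "(int j + q) mod int n = x mod int n \<longleftrightarrow> int j mod int n = (x - q) mod int n"
      by (simp add: mod_eq_dvd_iff algebra_simps)
    also have "\<dots> \<longleftrightarrow> j = ?j"
      using that by auto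
    finally show ?thesis .
  qed
  moreover have "?j < n" using assms by (simp add: nat_less_iff)
  ultimately have "{j. j < n \<and> (int j + q) mod int n = x mod int n} = {?j}" by auto
  then show ?thesis by simp
qed

lemma card_consecutive_even_reps:
  assumes "odd n"
  shows "card {j. j < n \<and> has_even_rep n a (int j + q) \<and> has_even_rep n a (int j + q + 1)} = 1"
proof -
  have "has_even_rep n a (int j + q) \<and> has_even_rep n a (int j + q + 1) \<longleftrightarrow>
      (int j + q) mod int n = (if even a then a - 1 else a) mod int n" for j
    using has_even_rep_odd_both_iff[OF assms] .
  then show ?thesis
    using card_residue_class[OF odd_pos[OF assms]] by simp
qed

section \<open>Crossings of integer sequences with unit steps\<close>

lemma up_crossing:
  fixes h :: "nat \<Rightarrow> int"
  assumes step: "\<And>m. h (Suc m) \<le> h m + 1"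
    and "m1 \<le> m2" "h m1 \<le> v" "v < h m2"
  shows "\<exists>m. m1 \<le> m \<and> m < m2 \<and> h m = v \<and> h (Suc m) = v + 1"
  using assms(2,4)
proof (induction m2 rule: dec_induct)
  case base
  then show ?case using assms(3) by simp
next
  case (step m)
  show ?case
  proof (cases "v < h m")
    case True
    then show ?thesis using step.IH less_SucI by blast
  next
    case False
    then have "h m = v" "h (Suc m) = v + 1"
      using step.prems assms(1)[of m] by auto
    then show ?thesis using step.hyps by blast
  qed
qed

lemma cyclic_up_crossing:
  fixes h :: "nat \<Rightarrow> int"
  assumes step: "\<And>m. h (Suc m) \<le> h m + 1" and period: "h N = h 0"
    and "m1 \<le> N" "m2 \<le> N" "h m1 \<le> v" "v < h m2"
  shows "\<exists>m<N. h m = v \<and> h (Suc m) = v + 1"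
proof -
  consider "m1 \<le> m2" | "h 0 \<le> v" | "v < h N"
    using period by linarith
  then show ?thesis
  proof cases
    case 1
    then obtain m where "m < m2" "h m = v \<and> h (Suc m) = v + 1"
      using up_crossing[OF step 1 assms(5,6)] by blast
    then show ?thesis using assms(4) by (blast intro: less_le_trans)
  next
    case 2
    then obtain m where "m < m2" "h m = v \<and> h (Suc m) = v + 1"
      using up_crossing[OF step _ 2 assms(6)] by blast
    then show ?thesis using assms(4) by (blast intro: less_le_trans)
  next
    case 3
    then show ?thesis using up_crossing[OF step assms(3,5) 3] by blast
  qed
qed

lemma cyclic_down_crossing:
  fixes h :: "nat \<Rightarrow> int"
  assumes step: "\<And>m. h m - 1 \<le> h (Suc m)" and period: "h N = h 0"
    and "m1 \<le> N" "m2 \<le> N" "v < h m1" "h m2 \<le> v"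
  shows "\<exists>m<N. h m = v + 1 \<and> h (Suc m) = v"
proof -
  have "\<exists>m<N. - h m = - v - 1 \<and> - h (Suc m) = - v - 1 + 1"
    by (rule cyclic_up_crossing[of "\<lambda>m. - h m" N m1 m2]) (use assms in \<open>auto simp: algebra_simps\<close>)
  then show ?thesis by auto
qed

section \<open>Lifting a closed walk on a ring to the integers\<close>

text \<open>\<open>g\<close> wraps \<open>\<int>\<close> around a ring with \<open>n\<close> vertices, \<open>f\<close> is a closed walk of length \<open>N\<close> on
  it (read periodically), and \<open>z0\<close> lifts its starting vertex.\<close>

locale ring_walk =
  fixes n N :: nat and g :: "int \<Rightarrow> 'a" and f :: "nat \<Rightarrow> 'a" and z0 :: int
  assumes g_eq_iff: "g x = g y \<longleftrightarrow> x mod int n = y mod int n"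
    and n_ge_3: "n \<ge> 3" and N_pos: "N > 0"
    and f_0: "f 0 = g z0"
    and step_edge: "\<exists>w. {f k, f (Suc k)} = {g w, g (w + 1)}"
    and reversal: "\<exists>p. \<forall>k<N. p k < N \<and> p (p k) = k \<and> f (p k) = f (Suc k) \<and> f (Suc (p k)) = f k"
    and edge_used: "\<exists>k<N. {f k, f (Suc k)} = {g w, g (w + 1)}"
    and edge_used_at_most_twice: "card {k. k < N \<and> {f k, f (Suc k)} = {g w, g (w + 1)}} \<le> 2"
begin

lemma g_eq_shift:
  assumes "g x = g y"
  shows "g (x + d) = g (y + d)"
  using assms unfolding g_eq_iff by (intro mod_add_cong refl)

lemma g_no_small_period:
  assumes "g (x + d) = g x" "\<bar>d\<bar> \<le> 2"
  shows "d = 0"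
proof -
  have "int n dvd d"
    using assms(1) by (simp add: g_eq_iff mod_eq_dvd_iff)
  then have "d \<noteq> 0 \<Longrightarrow> int n \<le> \<bar>d\<bar>"
    using dvd_imp_le_int by force
  then show ?thesis
    using assms(2) n_ge_3 by linarith
qed

lemma walk_step_lift:
  assumes "f k = g u"
  shows "f (Suc k) = g (u + 1) \<or> f (Suc k) = g (u - 1)"
proof -
  obtain w where "{f k, f (Suc k)} = {g w, g (w + 1)}"
    using step_edge by blast
  then consider "f k = g w" "f (Suc k) = g (w + 1)" | "f k = g (w + 1)" "f (Suc k) = g w"
    by (auto simp: doubleton_eq_iff)
  then show ?thesis
  proof cases
    case 1
    then show ?thesis using g_eq_shift[of w u 1] assms by simp
  next
    case 2
    then show ?thesis using g_eq_shift[of "w + 1" u "- 1"] assms by simp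
  qed
qed

fun height :: "nat \<Rightarrow> int" where
  "height 0 = 0"
| "height (Suc k) = (if f (Suc k) = g (z0 + height k + 1) then height k + 1 else height k - 1)"

lemma f_height: "f k = g (z0 + height k)"
proof (induction k)
  case 0
  then show ?case using f_0 by simp
next
  case (Suc k)
  then show ?case
    using walk_step_lift[OF Suc] by (auto simp: algebra_simps)
qed

lemma height_Suc_cases: "height (Suc k) = height k + 1 \<or> height (Suc k) = height k - 1"
  by simp

lemma even_height_iff: "even (height k) \<longleftrightarrow> even k"
  by (induction k) auto

declare height.simps(2) [simp del]

lemma height_step_reversed:
  assumes "f m = f (Suc k)" "f (Suc m) = f k"
  shows "height (Suc m) - height m = height k - height (Suc k)"
proof -
  define d where "d = height (Suc k) - height k"
  define e where "e = height (Suc m) - height m"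
  have "g (z0 + height m) = g (z0 + height k + d)"
    using assms(1) f_height[of m] f_height[of "Suc k"] by (simp add: d_def)
  then have "g (z0 + height m + e) = g (z0 + height k + d + e)"
    by (rule g_eq_shift)
  also have "g (z0 + height m + e) = g (z0 + height k)"
    using assms(2) f_height[of k] f_height[of "Suc m"] by (simp add: e_def)
  finally have "g (z0 + height k + (d + e)) = g (z0 + height k)"
    by (simp add: add.assoc)
  moreover have "\<bar>d + e\<bar> \<le> 2"
    using height_Suc_cases[of k] height_Suc_cases[of m] by (auto simp: d_def e_def)
  ultimately have "d + e = 0"
    by (rule g_no_small_period)
  then show ?thesis by (simp add: d_def e_def)
qed

lemma height_N: "height N = 0"
proof -
  obtain p where p: "\<forall>k<N. p k < N \<and> p (p k) = k \<and> f (p k) = f (Suc k) \<and> f (Suc (p k)) = f k"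
    using reversal by blast
  define d where "d k = height (Suc k) - height k" for k
  have "(\<Sum>k<N. d k) = (\<Sum>k<N. d (p k))"
    by (rule sum.reindex_bij_witness[of _ p p]) (use p in auto)
  also have "\<dots> = (\<Sum>k<N. - d k)"
    using p height_step_reversed unfolding d_def by (intro sum.cong) auto
  finally have "(\<Sum>k<N. d k) = 0"
    by (simp add: sum_negf)
  moreover have "(\<Sum>k<N. d k) = height N - height 0"
    unfolding d_def by (rule sum_lessThan_telescope)
  ultimately show ?thesis by simp
qed

lemma height_up_crossing:
  assumes "m1 \<le> N" "m2 \<le> N" "height m1 \<le> v" "v < height m2"
  shows "\<exists>m<N. height m = v \<and> height (Suc m) = v + 1"
proof (rule cyclic_up_crossing[OF _ _ assms])
  show "height (Suc m) \<le> height m + 1" for m using height_Suc_cases[of m] by linarith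
qed (simp add: height_N)

lemma height_down_crossing:
  assumes "m1 \<le> N" "m2 \<le> N" "v < height m1" "height m2 \<le> v"
  shows "\<exists>m<N. height m = v + 1 \<and> height (Suc m) = v"
proof (rule cyclic_down_crossing[OF _ _ assms])
  show "height m - 1 \<le> height (Suc m)" for m using height_Suc_cases[of m] by linarith
qed (simp add: height_N)

definition hmin where "hmin = Min (height ` {..<N})"
definition hmax where "hmax = Max (height ` {..<N})"

lemma height_bounds:
  assumes "k \<le> N"
  shows "hmin \<le> height k \<and> height k \<le> hmax"
proof -
  have "height k \<in> height ` {..<N}"
    using assms N_pos height_N by (cases "k = N") (auto intro: image_eqI[of _ _ 0])
  then show ?thesis unfolding hmin_def hmax_def by simp
qed

lemma hmin_attained: "\<exists>k<N. height k = hmin"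
proof -
  have "hmin \<in> height ` {..<N}" unfolding hmin_def using N_pos by (intro Min_in) auto
  then show ?thesis by auto
qed

lemma hmax_attained: "\<exists>k<N. height k = hmax"
proof -
  have "hmax \<in> height ` {..<N}" unfolding hmax_def using N_pos by (intro Max_in) auto
  then show ?thesis by auto
qed

lemma height_attains:
  assumes "hmin \<le> v" "v \<le> hmax"
  shows "\<exists>k<N. height k = v"
proof (cases "v = hmax")
  case True
  then show ?thesis using hmax_attained by blast
next
  case False
  obtain ka where "ka < N" "height ka = hmin" using hmin_attained by blast
  moreover obtain kb where "kb < N" "height kb = hmax" using hmax_attained by blast
  ultimately show ?thesis
    using height_up_crossing[of ka kb v] assms False by auto
qed

lemma step_edge_lowest:
  fixes k :: nat
  defines "l \<equiv> min (height k) (height (Suc k))"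
  shows "{f k, f (Suc k)} = {g (z0 + l), g (z0 + l + 1)}"
proof (cases "height (Suc k) = height k + 1")
  case True
  then show ?thesis using f_height[of k] f_height[of "Suc k"] by (simp add: l_def add.assoc)
next
  case False
  then have "height (Suc k) = height k - 1" using height_Suc_cases[of k] by blast
  then show ?thesis using f_height[of k] f_height[of "Suc k"] by (simp add: l_def insert_commute)
qed

lemma ring_edge_eq_imp_g_eq:
  assumes "{g x, g (x + 1)} = {g y, g (y + 1)}"
  shows "g x = g y"
proof (rule ccontr)
  assume "g x \<noteq> g y"
  then have "g x = g (y + 1)" "g (x + 1) = g y"
    using assms by (auto simp: doubleton_eq_iff)
  then have "g (y + 2) = g y"
    using g_eq_shift[of x "y + 1" 1] by (simp add: add.assoc)
  then show False
    using g_no_small_period[of y 2] by simp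
qed

lemma height_range_ge: "int n \<le> hmax - hmin"
proof -
  have "{0..<int n} \<subseteq> (\<lambda>l. (z0 + l) mod int n) ` {hmin..<hmax}"
  proof
    fix t assume t: "t \<in> {0..<int n}"
    obtain k where k: "k < N" "{f k, f (Suc k)} = {g t, g (t + 1)}"
      using edge_used by blast
    define l where "l = min (height k) (height (Suc k))"
    have "g (z0 + l) = g t"
      using k(2) step_edge_lowest[of k] ring_edge_eq_imp_g_eq unfolding l_def by metis
    then have "(z0 + l) mod int n = t"
      using t by (simp add: g_eq_iff)
    moreover have "hmin \<le> l" "l < hmax"
      using height_bounds[of k] height_bounds[of "Suc k"] height_Suc_cases[of k] k(1)
      by (auto simp: l_def)
    ultimately show "t \<in> (\<lambda>l. (z0 + l) mod int n) ` {hmin..<hmax}"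
      by force
  qed
  then have "card {0..<int n} \<le> card ((\<lambda>l. (z0 + l) mod int n) ` {hmin..<hmax})"
    by (intro card_mono) auto
  also have "\<dots> \<le> card {hmin..<hmax}"
    by (rule card_image_le) simp
  finally show ?thesis
    using n_ge_3 by (cases "0 \<le> hmax - hmin") (auto simp: le_nat_iff)
qed

lemma height_range_le: "hmax - hmin \<le> int n"
proof (rule ccontr)
  assume "\<not> hmax - hmin \<le> int n"
  then have wide: "hmin + int n < hmax" by simp
  obtain ka where ka: "ka < N" "height ka = hmin" using hmin_attained by blast
  obtain kb where kb: "kb < N" "height kb = hmax" using hmax_attained by blast
  let ?E = "{g (z0 + hmin), g (z0 + hmin + 1)}"
  have edge: "{f m, f (Suc m)} = ?E"
    if "min (height m) (height (Suc m)) \<in> {hmin, hmin + int n}" for m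
  proof -
    have "g (z0 + (hmin + int n) + e) = g (z0 + hmin + e)" for e
    proof -
      have "z0 + (hmin + int n) + e = (z0 + hmin + e) + int n" by simp
      then show ?thesis by (simp only: g_eq_iff mod_add_self2)
    qed
    from this[of 0] this[of 1] that show ?thesis
      using step_edge_lowest[of m] by (elim insertE) (simp_all only: add_0_right empty_iff)
  qed
  obtain m1 where m1: "m1 < N" "height m1 = hmin" "height (Suc m1) = hmin + 1"
    using height_up_crossing[of ka kb hmin] ka kb wide by auto
  obtain m2 where m2: "m2 < N" "height m2 = hmin + 1" "height (Suc m2) = hmin"
    using height_down_crossing[of kb ka hmin] ka kb wide by auto
  obtain m3 where m3: "m3 < N" "height m3 = hmin + int n" "height (Suc m3) = hmin + int n + 1"
    using height_up_crossing[of ka kb "hmin + int n"] ka kb wide by auto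
  obtain m4 where m4: "m4 < N" "height m4 = hmin + int n + 1" "height (Suc m4) = hmin + int n"
    using height_down_crossing[of kb ka "hmin + int n"] ka kb wide by auto
  have "{m1, m2, m3, m4} \<subseteq> {k. k < N \<and> {f k, f (Suc k)} = ?E}"
    using m1 m2 m3 m4 edge by auto
  then have "card {m1, m2, m3, m4} \<le> card {k. k < N \<and> {f k, f (Suc k)} = ?E}"
    by (rule card_mono[rotated]) simp
  also have "\<dots> \<le> 2"
    by (rule edge_used_at_most_twice)
  finally have "card {m1, m2, m3, m4} \<le> 2" .
  moreover have "distinct [m1, m2, m3, m4]"
    using m1 m2 m3 m4 n_ge_3 by auto
  then have "card {m1, m2, m3, m4} = 4"
    using distinct_card by fastforce
  ultimately show False by simp
qed

lemma even_steps_iff_has_even_rep: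
  "g t \<in> {f k | k. k < N \<and> even k} \<longleftrightarrow> has_even_rep n hmin (t - z0)"
proof
  assume "g t \<in> {f k | k. k < N \<and> even k}"
  then obtain k where k: "k < N" "even k" "g (z0 + height k) = g t"
    using f_height by auto
  have "height k mod int n = (t - z0) mod int n"
    using k(3) mod_diff_cong[of "z0 + height k" "int n" t z0 z0] by (simp add: g_eq_iff)
  moreover have "hmin \<le> height k" "height k \<le> hmin + int n"
    using height_bounds[of k] height_range_le k(1) by auto
  moreover have "even (height k)"
    using even_height_iff k(2) by simp
  ultimately show "has_even_rep n hmin (t - z0)"
    unfolding has_even_rep_def by blast
next
  assume "has_even_rep n hmin (t - z0)"
  then obtain v where v: "hmin \<le> v" "v \<le> hmin + int n" "even v" "v mod int n = (t - z0) mod int n"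
    unfolding has_even_rep_def by blast
  obtain k where k: "k < N" "height k = v"
    using height_attains[of v] v(1,2) height_range_ge by auto
  have "(z0 + v) mod int n = (z0 + (t - z0)) mod int n"
    using v(4) by (intro mod_add_cong refl)
  then have "f k = g t"
    using f_height[of k] k(2) by (simp add: g_eq_iff)
  moreover have "even k"
    using even_height_iff[of k] k(2) v(3) by simp
  ultimately show "g t \<in> {f k | k. k < N \<and> even k}"
    using k(1) by force
qed

end

section \<open>Balanced routes of ring type\<close>

locale ring_route =
  fixes l0 :: nat and V :: "'a set" and i :: "'a list" and c :: "nat \<Rightarrow> 'a"
  assumes two_d_ring: "two_d_ring l0 V i" and ring_order: "ring_order V i c"
begin

definition cover :: "int \<Rightarrow> 'a" where
  "cover z = c (nat (z mod int l0))"

definition walk :: "nat \<Rightarrow> 'a" where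
  "walk k = i ! (k mod length i)"

lemma length_i: "length i = 2 * l0"
  using two_d_ring unfolding two_d_ring_def ring_type_def is_route_def by auto

lemma l0_pos: "l0 > 0"
  using two_d_ring unfolding two_d_ring_def ring_type_def is_route_def by auto

lemma bij_c: "bij_betw c {..<l0} (set i)"
  using two_d_ring ring_order
  unfolding two_d_ring_def ring_order_def ring_type_def is_route_def by auto

lemma UE_i: "UE i = {{c j, c (Suc j mod l0)} | j. j < l0}"
  using two_d_ring ring_order unfolding two_d_ring_def ring_order_def by auto

lemma edge_multiplicity: "e \<in> UE i \<Longrightarrow> card {k. k < length i \<and> uconn i k = e} = 2"
  using two_d_ring unfolding two_d_ring_def ring_type_def by blast

lemma cover_int: "j < l0 \<Longrightarrow> cover (int j) = c j"
  unfolding cover_def by (simp flip: of_nat_mod)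

lemma cover_int_Suc: "cover (int j + 1) = c (Suc j mod l0)"
proof -
  have "(int j + 1) mod int l0 = int (Suc j mod l0)"
    by (simp add: zmod_int add.commute)
  then show ?thesis unfolding cover_def by simp
qed

lemma cover_eq_iff: "cover x = cover y \<longleftrightarrow> x mod int l0 = y mod int l0"
proof -
  have "nat (z mod int l0) < l0" for z
    using l0_pos by (simp add: nat_less_iff)
  then have "cover x = cover y \<longleftrightarrow> nat (x mod int l0) = nat (y mod int l0)"
    unfolding cover_def using bij_betw_imp_inj_on[OF bij_c] by (simp add: inj_on_eq_iff)
  also have "\<dots> \<longleftrightarrow> x mod int l0 = y mod int l0"
    using l0_pos by (simp add: eq_nat_nat_iff)
  finally show ?thesis .
qed

lemma cover_eq_c_nat: "cover w = c (nat (w mod int l0)) \<and> nat (w mod int l0) < l0"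
  unfolding cover_def using l0_pos by (simp add: nat_less_iff)

lemma set_i_eq_range_cover: "set i = range cover"
proof -
  have "c ` {..<l0} = range cover"
  proof (intro equalityI subsetI)
    fix x assume "x \<in> c ` {..<l0}"
    then obtain j where "j < l0" "x = c j" by auto
    then show "x \<in> range cover" using cover_int by (metis rangeI)
  next
    fix x assume "x \<in> range cover"
    then obtain w where "x = cover w" by auto
    then show "x \<in> c ` {..<l0}" using cover_eq_c_nat[of w] by auto
  qed
  then show ?thesis using bij_c by (simp add: bij_betw_def)
qed

lemma UE_eq_range_cover: "UE i = range (\<lambda>w. {cover w, cover (w + 1)})"
proof -
  have "{cover w, cover (w + 1)} \<in> UE i" for w
  proof -
    define j where "j = nat (w mod int l0)"
    have "cover (w + 1) = cover (int j + 1)"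
      unfolding cover_eq_iff j_def using l0_pos by (simp add: mod_add_left_eq)
    moreover have "cover w = c j" "j < l0"
      using cover_eq_c_nat[of w] j_def by simp_all
    ultimately have "{cover w, cover (w + 1)} = {c j, c (Suc j mod l0)}"
      using cover_int_Suc[of j] by simp
    then show ?thesis
      unfolding UE_i using \<open>j < l0\<close> by blast
  qed
  moreover have "{c j, c (Suc j mod l0)} \<in> range (\<lambda>w. {cover w, cover (w + 1)})" if "j < l0" for j
    using cover_int[OF that] cover_int_Suc[of j] by (metis (no_types, lifting) rangeI)
  ultimately show ?thesis
    unfolding UE_i by blast
qed

lemma uconn_walk: "uconn i (k mod length i) = {walk k, walk (Suc k)}"
  unfolding uconn_def etail_def ehead_def walk_def mod_Suc_eq ..

lemma uconn_walk_less: "k < length i \<Longrightarrow> uconn i k = {walk k, walk (Suc k)}"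
  using uconn_walk[of k] by simp

lemma black_eq_even_steps: "black i = {walk k | k. k < length i \<and> even k}"
  unfolding black_def walk_def by (rule Collect_cong) (metis mod_less)

lemma walk_reversal:
  "\<exists>p. \<forall>k<length i. p k < length i \<and> p (p k) = k
      \<and> walk (p k) = walk (Suc k) \<and> walk (Suc (p k)) = walk k"
proof -
  obtain p where p: "\<forall>k<length i. p k < length i \<and> p k \<noteq> k \<and> p (p k) = k
      \<and> ehead i k = etail i (p k) \<and> etail i k = ehead i (p k)"
    using two_d_ring unfolding two_d_ring_def balanced_def by blast
  have walk: "walk k = etail i k" "walk (Suc k) = ehead i k" if "k < length i" for k
    using that unfolding walk_def etail_def ehead_def by simp_all
  show ?thesis
  proof (intro exI allI impI)
    fix k assume k: "k < length i"
    then have P: "p k < length i" "p (p k) = k"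
      "ehead i k = etail i (p k)" "etail i k = ehead i (p k)"
      using p by blast+
    then show "p k < length i \<and> p (p k) = k \<and> walk (p k) = walk (Suc k) \<and> walk (Suc (p k)) = walk k"
      using walk[OF k] walk[OF P(1)] by simp
  qed
qed

lemma ring_walk_cover:
  assumes "l0 \<ge> 3"
  shows "\<exists>z0. ring_walk l0 (length i) cover walk z0"
proof -
  have len_pos: "length i > 0" using length_i l0_pos by simp
  then have "walk 0 \<in> range cover"
    unfolding walk_def set_i_eq_range_cover[symmetric] by simp
  then obtain z0 where z0: "walk 0 = cover z0" by auto
  have edge_walk: "{cover w, cover (w + 1)} = {walk k, walk (Suc k)} \<longleftrightarrow>
      uconn i k = {cover w, cover (w + 1)}" if "k < length i" for k w
    using uconn_walk_less[OF that] by auto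
  have "ring_walk l0 (length i) cover walk z0"
  proof
    show "cover x = cover y \<longleftrightarrow> x mod int l0 = y mod int l0" for x y
      by (rule cover_eq_iff)
    show "\<exists>w. {walk k, walk (Suc k)} = {cover w, cover (w + 1)}" for k
    proof -
      have "uconn i (k mod length i) \<in> UE i"
        unfolding UE_def using len_pos by simp
      then show ?thesis
        unfolding UE_eq_range_cover uconn_walk by auto
    qed
    show "\<exists>k<length i. {walk k, walk (Suc k)} = {cover w, cover (w + 1)}" for w
    proof -
      have "{cover w, cover (w + 1)} \<in> UE i"
        unfolding UE_eq_range_cover by simp
      then obtain k where "k < length i" "uconn i k = {cover w, cover (w + 1)}"
        unfolding UE_def by auto
      then show ?thesis using edge_walk by blast
    qed
    show "card {k. k < length i \<and> {walk k, walk (Suc k)} = {cover w, cover (w + 1)}} \<le> 2" for w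
    proof -
      have "{k. k < length i \<and> {walk k, walk (Suc k)} = {cover w, cover (w + 1)}}
          = {k. k < length i \<and> uconn i k = {cover w, cover (w + 1)}}"
        using edge_walk by auto
      then show ?thesis
        using edge_multiplicity[of "{cover w, cover (w + 1)}"] UE_eq_range_cover by simp
    qed
  qed (fact assms len_pos z0 walk_reversal)+
  then show ?thesis ..
qed

lemma black_window_ge_3:
  assumes "l0 \<ge> 3"
  shows "\<exists>a q. \<forall>t. cover t \<in> black i \<longleftrightarrow> has_even_rep l0 a (t + q)"
proof -
  obtain z0 where "ring_walk l0 (length i) cover walk z0"
    using ring_walk_cover[OF assms] by blast
  then interpret ring_walk l0 "length i" cover walk z0 .
  have "cover t \<in> black i \<longleftrightarrow> has_even_rep l0 hmin (t + - z0)" for t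
    unfolding black_eq_even_steps even_steps_iff_has_even_rep by simp
  then show ?thesis by blast
qed

lemma black_window_1:
  assumes "l0 = 1"
  shows "\<exists>a q. \<forall>t. cover t \<in> black i \<longleftrightarrow> has_even_rep l0 a (t + q)"
proof -
  have cover_const: "cover t = c 0" for t
    unfolding cover_def using assms by simp
  have "walk 0 \<in> black i"
    unfolding black_eq_even_steps using length_i assms by force
  moreover have "walk 0 \<in> range cover"
    unfolding walk_def set_i_eq_range_cover[symmetric] using length_i assms by simp
  ultimately have "cover t \<in> black i" for t
    using cover_const by auto
  moreover have "has_even_rep l0 0 t" for t
    unfolding has_even_rep_def assms by auto
  ultimately show ?thesis by blast
qed

lemma black_window_2:
  assumes "l0 = 2"
  shows "\<exists>a q. \<forall>t. cover t \<in> black i \<longleftrightarrow> has_even_rep l0 a (t + q)"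
proof -
  have "walk k \<in> range cover" for k
    unfolding walk_def set_i_eq_range_cover[symmetric] using length_i l0_pos by simp
  then have walk_cover: "\<exists>x. walk k = cover x" for k
    by blast
  have step_parity: "x mod 2 \<noteq> y mod 2" if "walk k = cover x" "walk (Suc k) = cover y" for k x y
  proof -
    have "uconn i (k mod length i) \<in> UE i"
      unfolding UE_def using length_i l0_pos by simp
    then have "{cover x, cover y} \<in> range (\<lambda>w. {cover w, cover (w + 1)})"
      unfolding UE_eq_range_cover uconn_walk that .
    then obtain w where "{cover x, cover y} = {cover w, cover (w + 1)}"
      by auto
    moreover have "cover w \<noteq> cover (w + 1)"
      unfolding cover_eq_iff using assms by presburger
    ultimately have "cover x \<noteq> cover y"
      by (auto simp: doubleton_eq_iff)
    then show ?thesis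
      unfolding cover_eq_iff using assms by simp
  qed
  obtain x0 x1 x2 where x: "walk 0 = cover x0" "walk 1 = cover x1" "walk 2 = cover x2"
    using walk_cover by metis
  have "x2 mod 2 = x0 mod 2"
    using step_parity[of 0 x0 x1] step_parity[of 1 x1 x2] x by (simp add: numeral_2_eq_2)
  then have "walk 2 = walk 0"
    using x cover_eq_iff assms by simp
  moreover have "black i = {walk 0, walk 2}"
  proof -
    have "k < length i \<and> even k \<longleftrightarrow> k = 0 \<or> k = 2" for k
      using length_i assms by presburger
    then show ?thesis unfolding black_eq_even_steps by auto
  qed
  ultimately have "cover t \<in> black i \<longleftrightarrow> even (t - x0)" for t
    using x(1) cover_eq_iff assms by (simp add: even_iff_mod_2_eq_zero mod_eq_dvd_iff)
  moreover have "has_even_rep 2 0 s \<longleftrightarrow> even s" for s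
    using has_even_rep_iff[of 2 0 s] by (simp add: even_iff_mod_2_eq_zero)
  ultimately show ?thesis
    using assms by (metis diff_conv_add_uminus)
qed

lemma black_window: "\<exists>a q. \<forall>t. cover t \<in> black i \<longleftrightarrow> has_even_rep l0 a (t + q)"
proof -
  have "l0 = 1 \<or> l0 = 2 \<or> l0 \<ge> 3"
    using l0_pos by linarith
  then show ?thesis
    using black_window_1 black_window_2 black_window_ge_3 by blast
qed

end

theorem lemma4p8:
  fixes l0 :: nat and V :: "'a set" and i :: "'a list" and c :: "nat \<Rightarrow> 'a"
  assumes "two_d_ring l0 V i"
    and "ring_order V i c"
  shows "(even l0 \<and> l0 \<ge> 2 \<longrightarrow>
            (\<forall>j < l0. c j \<in> black i \<longleftrightarrow> c (Suc j mod l0) \<notin> black i))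
       \<and> (odd l0 \<longrightarrow>
            card {j. j < l0 \<and> c j \<in> black i \<and> c (Suc j mod l0) \<in> black i} = 1
          \<and> (\<forall>j < l0. \<not> (c j \<in> black i \<and> c (Suc j mod l0) \<in> black i)
                 \<longrightarrow> (c j \<in> black i \<longleftrightarrow> c (Suc j mod l0) \<notin> black i)))"
proof -
  interpret ring_route l0 V i c
    using assms by unfold_locales
  obtain a q where black: "\<And>t. cover t \<in> black i \<longleftrightarrow> has_even_rep l0 a (t + q)"
    using black_window by blast
  have black_c: "c j \<in> black i \<longleftrightarrow> has_even_rep l0 a (int j + q)" if "j < l0" for j
    using black[of "int j"] cover_int[OF that] by simp
  have black_c_Suc: "c (Suc j mod l0) \<in> black i \<longleftrightarrow> has_even_rep l0 a (int j + q + 1)" for j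
    using black[of "int j + 1"] cover_int_Suc[of j] by (simp add: ac_simps)
  show ?thesis
  proof (intro conjI impI allI)
    fix j assume "even l0 \<and> l0 \<ge> 2" "j < l0"
    then show "c j \<in> black i \<longleftrightarrow> c (Suc j mod l0) \<notin> black i"
      using black_c black_c_Suc has_even_rep_even_period[of l0 a "int j + q"] by auto
  next
    assume odd: "odd l0"
    have "{j. j < l0 \<and> c j \<in> black i \<and> c (Suc j mod l0) \<in> black i}
        = {j. j < l0 \<and> has_even_rep l0 a (int j + q) \<and> has_even_rep l0 a (int j + q + 1)}"
      using black_c black_c_Suc by auto
    then show "card {j. j < l0 \<and> c j \<in> black i \<and> c (Suc j mod l0) \<in> black i} = 1"
      using card_consecutive_even_reps[OF odd] by simp
  next
    fix j assume "odd l0" "j < l0" "\<not> (c j \<in> black i \<and> c (Suc j mod l0) \<in> black i)"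
    then show "c j \<in> black i \<longleftrightarrow> c (Suc j mod l0) \<notin> black i"
      using black_c black_c_Suc has_even_rep_odd_period[of l0 a "int j + q"] by auto
  qed
qed

end
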